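(* Let $[\Lambda,m,m-1,\beta]$ be a minimax stratum in $\mathrm{A}=\mathrm{M}_n(\mathrm{F})$, with $\mathrm{E}=\mathrm{F}[\beta]$ of degree $n$ and ramification index $e=e(\mathrm{E}/\mathrm{F})$, and write all matrices with respect to the companion basis $\{1,\beta,\dots,\beta^{n-1}\}$ of $\mathrm{E}\cong\mathrm{F}^n$. Then the character $\psi_\beta$ of $\mathrm{U}^{\lfloor m/2\rfloor+1}(\Lambda)$ is trivial on $$\mathrm{U}^{\lfloor m/2\rfloor+1}(\Lambda)\cap\Sigma_n\mathrm{K}_n\big(n(1+m/e)\big)\Sigma_n^{-1}.$$
   Context: $\mathrm{F}$ non-archimedean local field, $\mathfrak{o}_\mathrm{F}$, $\mathfrak{p}_\mathrm{F}=\varpi_\mathrm{F}\mathfrak{o}_\mathrm{F}$, valuation $\nu_\mathrm{F}$. $\mathrm{R}$ algebraically closed of characteristic $\ell\neq p$; $\psi:\mathrm{F}\to\mathrm{R}^\times$ is a character trivial on $\mathfrak{p}_\mathrm{F}$ but not on $\mathfrak{o}_\mathrm{F}$. $\mathrm{K}_n=\mathrm{GL}_n(\mathfrak{o}_\mathrm{F})$, $\mathrm{K}_n(N)=\{\left(\begin{smallmatrix}a&b\\c&d\end{smallmatrix}\right)\in\mathrm{K}_n: c\in\mathrm{M}_{1\times(n-1)}(\mathfrak{p}_\mathrm{F}^N),\ d\in1+\mathfrak{p}_\mathrm{F}^N\}$, $\Sigma_n=\mathrm{diag}(\varpi_\mathrm{F}^{n-1},\dots,\varpi_\mathrm{F},1)$.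 Lattice chains: a lattice chain is a strictly decreasing periodic sequence $(\Lambda(i))_{i\in\mathbb{Z}}$ of $\mathfrak{o}_\mathrm{F}$-lattices in $\mathrm{F}^n$ with $\Lambda(i+e(\Lambda))=\mathfrak{p}_\mathrm{F}\Lambda(i)$; $\mathfrak{A}_r(\Lambda)=\{x\in\mathrm{A}:x\Lambda(i)\subseteq\Lambda(i+r)\ \forall i\}$, $\mathrm{U}^r(\Lambda)=1+\mathfrak{A}_r(\Lambda)$ for $r\geqslant1$. For $\beta\in\mathrm{A}$, $\psi_\beta(x)=\psi(\mathrm{Tr}(\beta(x-1)))$. Minimax stratum $[\Lambda,m,m-1,\beta]$: $m\geqslant1$ an integer, $\beta\in\mathrm{A}$ such that $\mathrm{E}=\mathrm{F}[\beta]$ is a field of degree $n$ over $\mathrm{F}$ with $\nu_\mathrm{E}(\beta)=-m$, $\gcd(m,e)=1$, and $\varpi_\mathrm{F}^m\beta^e+\mathfrak{p}_\mathrm{E}$ generates the residue field extension $k_\mathrm{E}/k_\mathrm{F}$; and $\Lambda(i)=\mathfrak{p}_\mathrm{E}^i$ under the identification $\mathrm{E}\cong\mathrm{F}^n$ given by the basis $\{1,\beta,\dots,\beta^{n-1}\}$ (so $e(\Lambda)=e$). In this basis $\beta$ is the companion matrix of its minimal polynomial $X^n+a_{n-1}X^{n-1}+\dots+a_0$: entries $1$ at positions $(i+1,i)$ and $-a_{i-1}$ at $(i,n)$; one has $\nu_\mathrm{F}(a_0)=-mn/e$ and $\nu_\mathrm{F}(a_i)\geqslant-m(n-i)/e$.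 *)

theory Defs
  imports "Jordan_Normal_Form.Determinant" "HOL-Computational_Algebra.Polynomial_Factorial"
begin

text \<open>v is the normalised valuation nu_F, only meaningful on nonzero elements;
  unif is a uniformiser. "val_ge v x k" means x lies in p_F^k (x = 0 allowed).\<close>

definition val_ge :: "('a::field \<Rightarrow> int) \<Rightarrow> 'a \<Rightarrow> int \<Rightarrow> bool" where
  "val_ge v x k \<longleftrightarrow> x = 0 \<or> k \<le> v x"

definition discrete_valuation :: "('a::field \<Rightarrow> int) \<Rightarrow> 'a \<Rightarrow> bool" where
  "discrete_valuation v unif \<longleftrightarrow> unif \<noteq> 0 \<and> v unif = 1 \<and>
     (\<forall>x y. x \<noteq> 0 \<longrightarrow> y \<noteq> 0 \<longrightarrow> v (x * y) = v x + v y) \<and>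
     (\<forall>x y. x \<noteq> 0 \<longrightarrow> y \<noteq> 0 \<longrightarrow> x + y \<noteq> 0 \<longrightarrow> min (v x) (v y) \<le> v (x + y))"

definition val_complete :: "('a::field \<Rightarrow> int) \<Rightarrow> bool" where
  "val_complete v \<longleftrightarrow>
     (\<forall>X :: nat \<Rightarrow> 'a. (\<forall>k. \<exists>N. \<forall>i\<ge>N. \<forall>j\<ge>N. val_ge v (X i - X j) k) \<longrightarrow>
        (\<exists>L. \<forall>k. \<exists>N. \<forall>i\<ge>N. val_ge v (X i - L) k))"

definition finite_residue_field :: "('a::field \<Rightarrow> int) \<Rightarrow> bool" where
  "finite_residue_field v \<longleftrightarrow>
     (\<exists>S. finite S \<and> (\<forall>x. val_ge v x 0 \<longrightarrow> (\<exists>s\<in>S. val_ge v s 0 \<and> val_ge v (x - s) 1)))"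

definition nonarch_local_field :: "('a::field \<Rightarrow> int) \<Rightarrow> 'a \<Rightarrow> bool" where
  "nonarch_local_field v unif \<longleftrightarrow> discrete_valuation v unif \<and> val_complete v \<and> finite_residue_field v"

definition residue_char :: "('a::field \<Rightarrow> int) \<Rightarrow> nat \<Rightarrow> bool" where
  "residue_char v p \<longleftrightarrow> prime p \<and> val_ge v (of_nat p) 1"

definition alg_closed :: "'c::field itself \<Rightarrow> bool" where
  "alg_closed _ \<longleftrightarrow> (\<forall>q :: 'c poly. 0 < degree q \<longrightarrow> (\<exists>x. poly q x = 0))"

definition level_one_char :: "('a::field \<Rightarrow> int) \<Rightarrow> ('a \<Rightarrow> 'c::field) \<Rightarrow> bool" where
  "level_one_char v psi \<longleftrightarrow> (\<forall>x. psi x \<noteq> 0) \<and> (\<forall>x y. psi (x + y) = psi x * psi y) \<and>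
     (\<forall>x. val_ge v x 1 \<longrightarrow> psi x = 1) \<and> (\<exists>x. val_ge v x 0 \<and> psi x \<noteq> 1)"

definition mat_trace :: "'a::comm_ring_1 mat \<Rightarrow> 'a" where
  "mat_trace A = (\<Sum>i<dim_row A. A $$ (i, i))"

text \<open>Companion matrix of X^n + a_(n-1) X^(n-1) + ... + a_0: entries 1 at (i+1,i) and
  -a_(i-1) at (i,n) (1-indexed), i.e. 1 at (i+1,i) and -a_i at (i,n-1) (0-indexed).\<close>
definition companion :: "nat \<Rightarrow> (nat \<Rightarrow> 'a::comm_ring_1) \<Rightarrow> 'a mat" where
  "companion n a = mat n n (\<lambda>(i, j). if i = j + 1 then 1 else if j = n - 1 then - a i else 0)"

definition char_poly_of :: "nat \<Rightarrow> (nat \<Rightarrow> 'a::comm_ring_1) \<Rightarrow> 'a poly" where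
  "char_poly_of n a = monom 1 n + (\<Sum>i<n. monom (a i) i)"

definition poly_at :: "nat \<Rightarrow> nat \<Rightarrow> (nat \<Rightarrow> 'a::comm_ring_1) \<Rightarrow> 'a mat \<Rightarrow> 'a mat" where
  "poly_at n d c B = mat n n (\<lambda>(i, k). \<Sum>j<d. c j * (B ^\<^sub>m j) $$ (i, k))"

definition field_E :: "nat \<Rightarrow> 'a::comm_ring_1 mat \<Rightarrow> 'a mat set" where
  "field_E n B = {poly_at n n c B | c. True}"

text \<open>For x in E (F complete) the unique extension of nu_F to E satisfies
  nu_F(det x) = nu_F(N_(E/F) x) = f(E/F) nu_E(x). Hence f(E/F) is the least positive value
  of nu_F o det on E^x, e(E/F) = n / f(E/F), and nu_E(x) = nu_F(det x) / f(E/F).\<close>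
definition res_deg :: "('a::field \<Rightarrow> int) \<Rightarrow> nat \<Rightarrow> 'a mat \<Rightarrow> int" where
  "res_deg v n B = (LEAST k. 0 < k \<and> (\<exists>x\<in>field_E n B. x \<noteq> 0\<^sub>m n n \<and> v (det x) = k))"

definition ram_index :: "('a::field \<Rightarrow> int) \<Rightarrow> nat \<Rightarrow> 'a mat \<Rightarrow> nat" where
  "ram_index v n B = nat (int n div res_deg v n B)"

definition val_E :: "('a::field \<Rightarrow> int) \<Rightarrow> nat \<Rightarrow> 'a mat \<Rightarrow> 'a mat \<Rightarrow> int" where
  "val_E v n B x = v (det x) div res_deg v n B"

definition val_E_ge :: "('a::field \<Rightarrow> int) \<Rightarrow> nat \<Rightarrow> 'a mat \<Rightarrow> 'a mat \<Rightarrow> int \<Rightarrow> bool" where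
  "val_E_ge v n B x k \<longleftrightarrow> x = 0\<^sub>m n n \<or> k \<le> val_E v n B x"

text \<open>varpi^m beta^e + p_E generates k_E over k_F: every element of o_E is congruent mod p_E
  to a polynomial with o_F coefficients in y.\<close>
definition residue_generates :: "('a::field \<Rightarrow> int) \<Rightarrow> nat \<Rightarrow> 'a mat \<Rightarrow> 'a mat \<Rightarrow> bool" where
  "residue_generates v n B y \<longleftrightarrow>
     (\<forall>z\<in>field_E n B. val_E_ge v n B z 0 \<longrightarrow>
        (\<exists>d c. (\<forall>j. val_ge v (c j) 0) \<and> val_E_ge v n B (z - poly_at n d c y) 1))"

text \<open>Lattice chain Lambda(i) = p_E^i under E = F^n, basis 1, beta, ..., beta^(n-1):
  the vector w corresponds to sum_j w_j beta^j.\<close>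
definition lattice_E :: "('a::field \<Rightarrow> int) \<Rightarrow> nat \<Rightarrow> 'a mat \<Rightarrow> int \<Rightarrow> 'a vec set" where
  "lattice_E v n B i = {w \<in> carrier_vec n. val_E_ge v n B (poly_at n n (\<lambda>j. w $ j) B) i}"

definition hered_A :: "(int \<Rightarrow> 'a::field vec set) \<Rightarrow> nat \<Rightarrow> int \<Rightarrow> 'a mat set" where
  "hered_A Lam n r = {X \<in> carrier_mat n n. \<forall>i. \<forall>w\<in>Lam i. X *\<^sub>v w \<in> Lam (i + r)}"

definition unit_U :: "(int \<Rightarrow> 'a::field vec set) \<Rightarrow> nat \<Rightarrow> nat \<Rightarrow> 'a mat set" where
  "unit_U Lam n r = {1\<^sub>m n + X | X. X \<in> hered_A Lam n (int r)}"

definition GL_O :: "('a::field \<Rightarrow> int) \<Rightarrow> nat \<Rightarrow> 'a mat set" where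
  "GL_O v n = {g \<in> carrier_mat n n. (\<forall>i<n. \<forall>j<n. val_ge v (g $$ (i, j)) 0) \<and>
                  det g \<noteq> 0 \<and> v (det g) = 0}"

definition K_mirabolic :: "('a::field \<Rightarrow> int) \<Rightarrow> nat \<Rightarrow> nat \<Rightarrow> 'a mat set" where
  "K_mirabolic v n N = {g \<in> GL_O v n. (\<forall>j<n - 1. val_ge v (g $$ (n - 1, j)) (int N)) \<and>
                           val_ge v (g $$ (n - 1, n - 1) - 1) (int N)}"

definition Sigma_mat :: "nat \<Rightarrow> 'a::field \<Rightarrow> 'a mat" where
  "Sigma_mat n unif = mat n n (\<lambda>(i, j). if i = j then unif ^ (n - 1 - i) else 0)"

definition Sigma_inv :: "nat \<Rightarrow> 'a::field \<Rightarrow> 'a mat" where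
  "Sigma_inv n unif = mat n n (\<lambda>(i, j). if i = j then inverse unif ^ (n - 1 - i) else 0)"

end

theory Submission
  imports Defs
begin

text \<open>In the companion basis,
  \<open>tr(\<beta>(x - 1)) = \<Sum>\<^sub>k (x - 1)(k, k+1) - \<Sum>\<^sub>i a\<^sub>i (x - 1)(n-1, i)\<close>.
  Conjugation by \<open>\<Sigma>\<^sub>n\<close> raises the valuation of the \<open>(i, j)\<close> entry by \<open>j - i\<close>, so for
  \<open>x\<close> in \<open>\<Sigma>\<^sub>n K\<^sub>n(n + mn/e) \<Sigma>\<^sub>n\<^bsup>-1\<^esup>\<close> the superdiagonal entries of \<open>x - 1\<close> lie in
  \<open>p\<^sub>F\<close> and its last row in \<open>p\<^sub>F\<^bsup>1+mn/e\<^esup>\<close>. The minimal polynomial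
  of \<open>\<beta>\<close> is irreducible, so by Hensel's lemma its Newton polygon is a single segment and
  \<open>\<nu>\<^sub>F(a\<^sub>i) \<ge> min(\<nu>\<^sub>F(a\<^sub>0), 0) \<ge> -mn/e\<close>. Hence the trace lies in \<open>p\<^sub>F\<close>, where
  \<open>\<psi>\<close> is trivial.\<close>

lemma poly_cutoff_plus_monom_mult_shift:
  "poly_cutoff s p + monom 1 s * poly_shift s p = (p :: 'a::comm_ring_1 poly)"
  by (rule poly_eqI) (auto simp: coeff_poly_cutoff coeff_monom_mult coeff_poly_shift)

lemma coeff_char_poly_of:
  "coeff (char_poly_of n a) j = (if j = n then 1 else if j < n then a j else 0)"
  unfolding char_poly_of_def coeff_add coeff_sum coeff_monom by (auto simp: sum.delta)

lemma degree_char_poly_of: "degree (char_poly_of n a) = n"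
  by (rule antisym) (auto intro: degree_le le_degree simp: coeff_char_poly_of)

lemma irreducible_char_poly_of_imp_pos: "irreducible (char_poly_of n a) \<Longrightarrow> 0 < n"
  by (rule ccontr) (simp add: char_poly_of_def)

lemma degree_eq_1_if_irreducible_coeff_0:
  fixes f :: "'a::field poly"
  assumes irr: "irreducible f" and f0: "coeff f 0 = 0"
  shows "degree f = 1"
proof -
  have "[:0, 1:] dvd f" using poly_eq_0_iff_dvd[of f 0] f0 by (simp add: poly_0_coeff_0)
  then obtain q where f: "f = [:0, 1:] * q" by (elim dvdE)
  have "\<not> is_unit [:0, 1 :: 'a:]" by (simp add: is_unit_iff_degree)
  then have "is_unit q" using irreducibleD[OF irr f] by blast
  then have "q \<noteq> 0" by auto
  with \<open>is_unit q\<close> have "degree q = 0" by (simp add: is_unit_iff_degree)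
  with \<open>q \<noteq> 0\<close> show ?thesis unfolding f by (simp add: degree_mult_eq)
qed

lemma irreducible_factor_degree:
  fixes f :: "'a::field poly"
  assumes irr: "irreducible f" and f: "f = A * B"
  shows "degree A = 0 \<or> degree A = degree f"
proof -
  have "A \<noteq> 0" "B \<noteq> 0" using irr f by auto
  then show ?thesis
    using irreducibleD[OF irr f] f by (auto simp: is_unit_iff_degree degree_mult_eq)
qed

lemma irreducible_smult:
  fixes f :: "'a::field poly"
  assumes "c \<noteq> 0"
  shows "irreducible (smult c f) \<longleftrightarrow> irreducible f"
proof -
  have "is_unit [:c:]" using assms by (simp add: is_unit_const_poly_iff dvd_field_iff)
  then show ?thesis using irreducible_mult_unit_left[of "[:c:]" f] by simp
qed

lemma det_companion:
  fixes a :: "nat \<Rightarrow> 'a::comm_ring_1"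
  assumes n: "0 < n"
  shows "det (companion n a) = - a 0 * (-1) ^ (n - 1)"
proof -
  define B where "B = companion n a"
  have Bc: "B \<in> carrier_mat n n" unfolding B_def companion_def by simp
  have "det B = (\<Sum>j<n. B $$ (0, j) * cofactor B 0 j)"
    by (rule laplace_expansion_row[OF Bc n])
  also have "\<dots> = (\<Sum>j<n. if j = n - 1 then B $$ (0, n - 1) * cofactor B 0 (n - 1) else 0)"
    by (rule sum.cong) (auto simp: B_def companion_def)
  also have "mat_delete B 0 (n - 1) = 1\<^sub>m (n - 1)"
    by (rule eq_matI) (auto simp: mat_delete_def B_def companion_def)
  then have "cofactor B 0 (n - 1) = (-1) ^ (n - 1)" unfolding cofactor_def by simp
  finally show ?thesis using n unfolding B_def by (simp add: companion_def)
qed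

lemma mat_trace_companion_mult:
  fixes Y :: "'a::comm_ring_1 mat"
  assumes Y: "Y \<in> carrier_mat n n"
  shows "mat_trace (companion n a * Y) =
    (\<Sum>k<n - 1. Y $$ (k, k + 1)) - (\<Sum>i<n. a i * Y $$ (n - 1, i))"
proof -
  have entry: "companion n a $$ (i, k) =
      (if i = k + 1 then 1 else 0) + (if k = n - 1 then - a i else 0)" if "i < n" "k < n" for i k
    using that by (simp add: companion_def)
  have "mat_trace (companion n a * Y) = (\<Sum>i<n. \<Sum>k<n. companion n a $$ (i, k) * Y $$ (k, i))"
    unfolding mat_trace_def using Y by (simp add: companion_def scalar_prod_def lessThan_atLeast0)
  also have "\<dots> = (\<Sum>i<n. \<Sum>k<n. (if i = k + 1 then Y $$ (k, i) else 0)
      + (if k = n - 1 then - a i * Y $$ (k, i) else 0))"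
    by (intro sum.cong refl) (simp add: entry distrib_right)
  also have "\<dots> = (\<Sum>i<n. \<Sum>k<n. if i = k + 1 then Y $$ (k, i) else 0)
      + (\<Sum>i<n. \<Sum>k<n. if k = n - 1 then - a i * Y $$ (k, i) else 0)"
    by (simp only: sum.distrib)
  also have "(\<Sum>i<n. \<Sum>k<n. if i = k + 1 then Y $$ (k, i) else 0) = (\<Sum>k<n - 1. Y $$ (k, k + 1))"
  proof -
    have "(\<Sum>i<n. \<Sum>k<n. if i = k + 1 then Y $$ (k, i) else 0)
        = (\<Sum>k<n. if Suc k < n then Y $$ (k, Suc k) else 0)"
      by (subst sum.swap) (simp add: sum.delta)
    also have "\<dots> = (\<Sum>k<n - 1. Y $$ (k, k + 1))"
      by (rule sum.mono_neutral_cong_right) auto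
    finally show ?thesis .
  qed
  also have "(\<Sum>i<n. \<Sum>k<n. if k = n - 1 then - a i * Y $$ (k, i) else 0)
      = - (\<Sum>i<n. a i * Y $$ (n - 1, i))"
    by (cases n) (simp_all add: sum.delta sum_negf)
  finally show ?thesis by simp
qed

lemma Sigma_conj_entry:
  assumes g: "g \<in> carrier_mat n n" and i: "i < n" and j: "j < n"
  shows "(Sigma_mat n u * g * Sigma_inv n u) $$ (i, j)
    = u ^ (n - 1 - i) * g $$ (i, j) * inverse u ^ (n - 1 - j)"
proof -
  have Sc: "Sigma_mat n u \<in> carrier_mat n n" "Sigma_inv n u \<in> carrier_mat n n"
    by (auto simp: Sigma_mat_def Sigma_inv_def)
  have left: "(Sigma_mat n u * g) $$ (i, k) = u ^ (n - 1 - i) * g $$ (i, k)" if "k < n" for k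
  proof -
    have "(Sigma_mat n u * g) $$ (i, k) = (\<Sum>l<n. Sigma_mat n u $$ (i, l) * g $$ (l, k))"
      using Sc g i that by (simp add: scalar_prod_def lessThan_atLeast0)
    also have "\<dots> = (\<Sum>l<n. if l = i then u ^ (n - 1 - i) * g $$ (i, k) else 0)"
      by (rule sum.cong) (use i in \<open>auto simp: Sigma_mat_def\<close>)
    finally show ?thesis using i by simp
  qed
  define G where "G = Sigma_mat n u * g"
  have "G \<in> carrier_mat n n" unfolding G_def using Sc g by simp
  then have "(G * Sigma_inv n u) $$ (i, j) = (\<Sum>l<n. G $$ (i, l) * Sigma_inv n u $$ (l, j))"
    using Sc i j by (simp add: scalar_prod_def lessThan_atLeast0)
  then have "(Sigma_mat n u * g * Sigma_inv n u) $$ (i, j)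
      = (\<Sum>l<n. (Sigma_mat n u * g) $$ (i, l) * Sigma_inv n u $$ (l, j))"
    unfolding G_def .
  also have "\<dots> = (\<Sum>l<n. if l = j then u ^ (n - 1 - i) * g $$ (i, j) * inverse u ^ (n - 1 - j) else 0)"
    by (rule sum.cong) (use j left in \<open>auto simp: Sigma_inv_def\<close>)
  finally show ?thesis using j by simp
qed

lemma Sigma_conj_minus_one:
  assumes u: "u \<noteq> 0" and g: "g \<in> carrier_mat n n"
  shows "Sigma_mat n u * g * Sigma_inv n u - 1\<^sub>m n = Sigma_mat n u * (g - 1\<^sub>m n) * Sigma_inv n u"
proof (rule eq_matI)
  fix i j assume "i < dim_row (Sigma_mat n u * (g - 1\<^sub>m n) * Sigma_inv n u)"
    "j < dim_col (Sigma_mat n u * (g - 1\<^sub>m n) * Sigma_inv n u)"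
  then have ij: "i < n" "j < n" by (simp_all add: Sigma_mat_def Sigma_inv_def)
  have "g - 1\<^sub>m n \<in> carrier_mat n n" by (rule minus_carrier_mat) simp
  then show "(Sigma_mat n u * g * Sigma_inv n u - 1\<^sub>m n) $$ (i, j)
      = (Sigma_mat n u * (g - 1\<^sub>m n) * Sigma_inv n u) $$ (i, j)"
    using Sigma_conj_entry[OF g ij, of u] Sigma_conj_entry[of "g - 1\<^sub>m n", OF _ ij, of u] g ij u
    by (cases "i = j") (simp_all add: algebra_simps power_inverse)
qed (auto simp: Sigma_mat_def Sigma_inv_def)

lemma K_mirabolic_minus_one_entries:
  assumes g: "g \<in> K_mirabolic v n N"
  shows "\<And>k. k + 1 < n \<Longrightarrow> val_ge v ((g - 1\<^sub>m n) $$ (k, k + 1)) 0"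
    and "\<And>i. i < n \<Longrightarrow> val_ge v ((g - 1\<^sub>m n) $$ (n - 1, i)) (int N)"
proof -
  show "val_ge v ((g - 1\<^sub>m n) $$ (k, k + 1)) 0" if "k + 1 < n" for k
    using g that by (auto simp: K_mirabolic_def GL_O_def)
  show "val_ge v ((g - 1\<^sub>m n) $$ (n - 1, i)) (int N)" if "i < n" for i
    using g that by (cases "i = n - 1") (auto simp: K_mirabolic_def GL_O_def)
qed

locale valued_field =
  fixes v :: "'a::field \<Rightarrow> int" and unif :: 'a
  assumes discrete: "discrete_valuation v unif"
begin

lemma val_mult: "x \<noteq> 0 \<Longrightarrow> y \<noteq> 0 \<Longrightarrow> v (x * y) = v x + v y"
  using discrete unfolding discrete_valuation_def by blast

lemma val_add_ge_min: "x \<noteq> 0 \<Longrightarrow> y \<noteq> 0 \<Longrightarrow> x + y \<noteq> 0 \<Longrightarrow> min (v x) (v y) \<le> v (x + y)"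
  using discrete unfolding discrete_valuation_def by blast

lemma unif_nonzero: "unif \<noteq> 0" and val_unif: "v unif = 1"
  using discrete unfolding discrete_valuation_def by auto

lemma val_one: "v 1 = 0"
  using val_mult[of 1 1] by simp

lemma val_uminus: "x \<noteq> 0 \<Longrightarrow> v (- x) = v x"
  using val_mult[of "-1" "-1"] val_mult[of "-1" x] val_one by simp

lemma val_inverse: "x \<noteq> 0 \<Longrightarrow> v (inverse x) = - v x"
  using val_mult[of x "inverse x"] val_one by simp

lemma val_power: "x \<noteq> 0 \<Longrightarrow> v (x ^ k) = int k * v x"
  by (induction k) (auto simp: val_one val_mult algebra_simps)

lemma val_ge_zero [simp]: "val_ge v 0 k"
  by (simp add: val_ge_def)

lemma val_ge_one: "val_ge v 1 0"
  by (simp add: val_ge_def val_one)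

lemma val_ge_add: "val_ge v x k \<Longrightarrow> val_ge v y k \<Longrightarrow> val_ge v (x + y) k"
  unfolding val_ge_def using val_add_ge_min[of x y] by fastforce

lemma val_ge_uminus [simp]: "val_ge v (- x) k \<longleftrightarrow> val_ge v x k"
  by (cases "x = 0") (auto simp: val_ge_def val_uminus)

lemma val_ge_diff: "val_ge v x k \<Longrightarrow> val_ge v y k \<Longrightarrow> val_ge v (x - y) k"
  using val_ge_add[of x k "- y"] by simp

lemma val_ge_mono: "val_ge v x k \<Longrightarrow> l \<le> k \<Longrightarrow> val_ge v x l"
  unfolding val_ge_def by auto

lemma val_ge_mult: "val_ge v x k \<Longrightarrow> val_ge v y l \<Longrightarrow> val_ge v (x * y) (k + l)"
  by (cases "x = 0"; cases "y = 0") (auto simp: val_ge_def val_mult)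

lemma val_ge_sum: "(\<And>i. i \<in> A \<Longrightarrow> val_ge v (f i) k) \<Longrightarrow> val_ge v (sum f A) k"
  by (induction A rule: infinite_finite_induct) (auto intro: val_ge_add)

lemma eq_0_if_val_ge_all: "(\<And>k. val_ge v x k) \<Longrightarrow> x = 0"
  unfolding val_ge_def by (metis add_le_same_cancel1 not_one_le_zero)

lemma val_ge_unif_power: "val_ge v (unif ^ k) (int k)"
  by (simp add: val_ge_def val_power unif_nonzero val_unif)

lemma val_ge_inverse_unif_power: "val_ge v (inverse unif ^ k) (- int k)"
  by (simp add: val_ge_def val_power val_inverse unif_nonzero val_unif)

lemma val_ge_Sigma_conj_entry:
  assumes g: "g \<in> carrier_mat n n" and i: "i < n" and j: "j < n"
    and gij: "val_ge v (g $$ (i, j)) k"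
  shows "val_ge v ((Sigma_mat n unif * g * Sigma_inv n unif) $$ (i, j)) (k + int j - int i)"
proof -
  have "val_ge v (unif ^ (n - 1 - i) * g $$ (i, j) * inverse unif ^ (n - 1 - j))
      (int (n - 1 - i) + k + - int (n - 1 - j))"
    by (intro val_ge_mult val_ge_unif_power val_ge_inverse_unif_power gij)
  then show ?thesis
    unfolding Sigma_conj_entry[OF g i j] by (rule val_ge_mono) (use i j in simp)
qed

lemma val_ge_trace_companion_Sigma_conj:
  assumes h: "h \<in> carrier_mat n n"
    and super: "\<And>k. k + 1 < n \<Longrightarrow> val_ge v (h $$ (k, k + 1)) 0"
    and last: "\<And>i. i < n \<Longrightarrow> val_ge v (h $$ (n - 1, i)) (int (n + M))"
    and coeff: "\<And>i. i < n \<Longrightarrow> a i \<noteq> 0 \<Longrightarrow> - int M \<le> v (a i)"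
  shows "val_ge v (mat_trace (companion n a * (Sigma_mat n unif * h * Sigma_inv n unif))) 1"
proof -
  define Y where "Y = Sigma_mat n unif * h * Sigma_inv n unif"
  have Y: "Y \<in> carrier_mat n n"
    unfolding Y_def using h by (intro mult_carrier_mat) (auto simp: Sigma_mat_def Sigma_inv_def)
  have "val_ge v (Y $$ (k, k + 1)) 1" if "k < n - 1" for k
    using val_ge_Sigma_conj_entry[OF h _ _ super] that unfolding Y_def by simp
  moreover have "val_ge v (a i * Y $$ (n - 1, i)) 1" if i: "i < n" for i
  proof (cases "a i = 0")
    case False
    have "n - 1 < n" using i by simp
    from val_ge_Sigma_conj_entry[OF h this i last[OF i]] have "val_ge v (Y $$ (n - 1, i)) (int M + 1)"
      using i unfolding Y_def by (auto elim: val_ge_mono)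
    with coeff[OF i False] val_ge_mult[of "a i" "- int M"] show ?thesis by (fastforce simp: val_ge_def)
  qed simp
  ultimately show ?thesis
    unfolding Y_def[symmetric] mat_trace_companion_mult[OF Y] by (auto intro!: val_ge_diff val_ge_sum)
qed

lemma res_deg_bounds:
  assumes n: "0 < n" and B: "B \<in> carrier_mat n n"
  shows "1 \<le> res_deg v n B" and "res_deg v n B \<le> int n"
proof -
  define P where "P = (\<lambda>k::int. 0 < k \<and> (\<exists>x\<in>field_E n B. x \<noteq> 0\<^sub>m n n \<and> v (det x) = k))"
  define x where "x = poly_at n n (\<lambda>j. if j = 0 then unif else 0) B"
  have x: "x = unif \<cdot>\<^sub>m 1\<^sub>m n"
  proof (rule eq_matI)
    fix i k assume ik: "i < dim_row (unif \<cdot>\<^sub>m 1\<^sub>m n)" "k < dim_col (unif \<cdot>\<^sub>m 1\<^sub>m n)"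
    have "(\<Sum>j<n. (if j = 0 then unif else 0) * (B ^\<^sub>m j) $$ (i, k))
        = (\<Sum>j<n. if j = 0 then unif * (B ^\<^sub>m 0) $$ (i, k) else 0)"
      by (rule sum.cong) auto
    then show "x $$ (i, k) = (unif \<cdot>\<^sub>m 1\<^sub>m n) $$ (i, k)"
      using ik B n unfolding x_def poly_at_def by simp
  qed (auto simp: x_def poly_at_def)
  have "x \<in> field_E n B" unfolding field_E_def x_def by blast
  moreover have "x \<noteq> 0\<^sub>m n n"
  proof
    assume "x = 0\<^sub>m n n"
    then have "x $$ (0, 0) = 0" using n by simp
    then show False using x n unif_nonzero by simp
  qed
  moreover have "v (det x) = int n" using x unif_nonzero by (simp add: val_power val_unif)
  ultimately have Pn: "P (int n)" unfolding P_def using n by auto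
  define k0 where "k0 = (LEAST j::nat. P (int j))"
  have Pk0: "P (int k0)" unfolding k0_def by (rule LeastI[of _ n]) (use Pn in simp)
  have "k0 \<le> n" unfolding k0_def by (rule Least_le) (use Pn in simp)
  have "int k0 \<le> y" if "P y" for y
  proof -
    have "P (int (nat y))" using that unfolding P_def by simp
    then have "k0 \<le> nat y" unfolding k0_def by (rule Least_le)
    then show ?thesis using that unfolding P_def by linarith
  qed
  then have "res_deg v n B = int k0"
    unfolding res_deg_def P_def[symmetric] by (intro Least_equality Pk0)
  then show "1 \<le> res_deg v n B" "res_deg v n B \<le> int n"
    using Pk0 \<open>k0 \<le> n\<close> unfolding P_def by auto
qed

definition poly_val_ge :: "'a poly \<Rightarrow> int \<Rightarrow> bool" where
  "poly_val_ge p k \<longleftrightarrow> (\<forall>j. val_ge v (coeff p j) k)"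

lemma poly_val_ge_zero [simp]: "poly_val_ge 0 k"
  by (simp add: poly_val_ge_def)

lemma poly_val_ge_add: "poly_val_ge p k \<Longrightarrow> poly_val_ge q k \<Longrightarrow> poly_val_ge (p + q) k"
  by (simp add: poly_val_ge_def val_ge_add)

lemma poly_val_ge_uminus [simp]: "poly_val_ge (- p) k \<longleftrightarrow> poly_val_ge p k"
  by (simp add: poly_val_ge_def)

lemma poly_val_ge_diff: "poly_val_ge p k \<Longrightarrow> poly_val_ge q k \<Longrightarrow> poly_val_ge (p - q) k"
  by (simp add: poly_val_ge_def val_ge_diff)

lemma poly_val_ge_mono: "poly_val_ge p k \<Longrightarrow> l \<le> k \<Longrightarrow> poly_val_ge p l"
  unfolding poly_val_ge_def using val_ge_mono by blast

lemma poly_val_ge_mult: "poly_val_ge p k \<Longrightarrow> poly_val_ge q l \<Longrightarrow> poly_val_ge (p * q) (k + l)"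
  unfolding poly_val_ge_def coeff_mult by (auto intro!: val_ge_sum val_ge_mult)

lemma poly_val_ge_sum: "(\<And>i. i \<in> A \<Longrightarrow> poly_val_ge (f i) k) \<Longrightarrow> poly_val_ge (sum f A) k"
  unfolding poly_val_ge_def coeff_sum by (auto intro!: val_ge_sum)

lemma poly_val_ge_monom: "val_ge v c k \<Longrightarrow> poly_val_ge (monom c s) k"
  by (simp add: poly_val_ge_def coeff_monom)

lemma poly_val_ge_one: "poly_val_ge 1 0"
  using poly_val_ge_monom[OF val_ge_one, of 0] by (simp add: one_pCons monom_0)

lemma poly_val_ge_power: "poly_val_ge p 0 \<Longrightarrow> poly_val_ge (p ^ j) 0"
  by (induction j) (auto simp: poly_val_ge_one dest: poly_val_ge_mult)

lemma poly_val_ge_cutoff: "poly_val_ge p k \<Longrightarrow> poly_val_ge (poly_cutoff s p) k"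
  by (simp add: poly_val_ge_def coeff_poly_cutoff)

lemma poly_val_ge_shift: "poly_val_ge p k \<Longrightarrow> poly_val_ge (poly_shift s p) k"
  by (simp add: poly_val_ge_def coeff_poly_shift)

lemma eq_0_if_poly_val_ge_all: "(\<And>k. poly_val_ge p k) \<Longrightarrow> p = 0"
  unfolding poly_val_ge_def by (metis eq_0_if_val_ge_all poly_eqI coeff_0)

lemma monom_bezout:
  assumes B0: "poly_val_ge B0 0" and "coeff B0 0 = 1"
  obtains U V where "poly_val_ge U 0" "poly_val_ge V 0" "monom 1 s * U + B0 * V = 1"
proof
  define X :: "'a poly" where "X = monom 1 1"
  define B' where "B' = poly_shift 1 B0"
  define Y where "Y = - (X * B')"
  have "poly_cutoff 1 B0 = 1"
    by (rule poly_eqI) (simp add: coeff_poly_cutoff coeff_1 \<open>coeff B0 0 = 1\<close>)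
  then have B0_eq: "B0 = 1 - Y"
    using poly_cutoff_plus_monom_mult_shift[of 1 B0] unfolding Y_def B'_def X_def by simp
  have "poly_val_ge B' 0" unfolding B'_def by (rule poly_val_ge_shift[OF B0])
  moreover have "poly_val_ge X 0" unfolding X_def by (rule poly_val_ge_monom[OF val_ge_one])
  ultimately have Y: "poly_val_ge Y 0" unfolding Y_def using poly_val_ge_mult by fastforce
  show "poly_val_ge ((- B') ^ s) 0" using \<open>poly_val_ge B' 0\<close> by (simp add: poly_val_ge_power)
  show "poly_val_ge (\<Sum>j<s. Y ^ j) 0" by (intro poly_val_ge_sum poly_val_ge_power Y)
  have "Y ^ s = X ^ s * (- B') ^ s"
    unfolding Y_def power_mult_distrib[symmetric] by simp
  then have "monom 1 s * (- B') ^ s = Y ^ s"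
    unfolding X_def monom_power by simp
  then show "monom 1 s * (- B') ^ s + B0 * (\<Sum>j<s. Y ^ j) = 1"
    unfolding B0_eq using one_diff_power_eq[of Y s] by (simp add: algebra_simps)
qed

end

text \<open>Write \<open>V E = R + X\<^sup>s Q\<close> with \<open>deg R < s\<close>, where \<open>E = g - A B\<close>. The Bezout identity
  \<open>X\<^sup>s U + B\<^sub>0 V = 1\<close> gives \<open>X\<^sup>s (U E + Q B\<^sub>0) + B\<^sub>0 R = E\<close>, so after adding \<open>R\<close> to \<open>A\<close> and
  \<open>U E + Q B\<^sub>0\<close> to \<open>B\<close> only terms with an extra factor \<open>A - X\<^sup>s\<close>, \<open>B - B\<^sub>0\<close> or \<open>R\<close>
  remain in the error.\<close>
definition hensel_step :: "nat \<Rightarrow> 'a::comm_ring_1 poly \<Rightarrow> 'a poly \<Rightarrow> 'a poly \<Rightarrow> 'a poly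
    \<Rightarrow> 'a poly \<times> 'a poly \<Rightarrow> 'a poly \<times> 'a poly" where
  "hensel_step s U V B0 g = (\<lambda>(A, B). let E = g - A * B; W = V * E in
     (A + poly_cutoff s W, B + U * E + poly_shift s W * B0))"

lemma degree_le_if_monom_mult_plus:
  fixes Q P R E :: "'a::comm_ring_1 poly"
  assumes eq: "monom 1 s * Q + P * R = E" and E: "degree E \<le> d" and P: "degree P \<le> d - s"
    and R: "\<And>j. s \<le> j \<Longrightarrow> coeff R j = 0" and s: "s \<le> d"
  shows "degree Q \<le> d - s"
proof (rule degree_le, intro allI impI)
  fix j assume j: "d - s < j"
  have "coeff (P * R) (j + s) = 0"
    unfolding coeff_mult
  proof (rule sum.neutral, intro ballI)
    fix i assume "i \<in> {..j + s}"
    show "coeff P i * coeff R (j + s - i) = 0"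
      using P j s R[of "j + s - i"] by (cases "i \<le> d - s") (simp_all add: coeff_eq_0)
  qed
  moreover have "coeff E (j + s) = 0" using E j s by (simp add: coeff_eq_0)
  ultimately show "coeff Q j = 0"
    using arg_cong[OF eq, of "\<lambda>p. coeff p (j + s)"] by (simp add: coeff_monom_mult)
qed

locale complete_valued_field = valued_field +
  assumes complete: "val_complete v"
begin

lemma val_ge_cauchy_limit:
  fixes X :: "nat \<Rightarrow> 'a"
  assumes cauchy: "\<And>i k. k \<le> i \<Longrightarrow> val_ge v (X i - X k) (int k + 1)"
  shows "\<exists>L. \<forall>k. val_ge v (L - X k) (int k + 1)"
proof -
  have "val_ge v (X i - X j) k" if "nat k \<le> i" "nat k \<le> j" for i j k
  proof -
    have "val_ge v ((X i - X (nat k)) - (X j - X (nat k))) (int (nat k) + 1)"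
      using cauchy[OF that(1)] cauchy[OF that(2)] by (rule val_ge_diff)
    then have "val_ge v (X i - X j) (int (nat k) + 1)" by simp
    then show ?thesis by (rule val_ge_mono) simp
  qed
  then have "\<forall>k. \<exists>N. \<forall>i\<ge>N. \<forall>j\<ge>N. val_ge v (X i - X j) k" by blast
  then obtain L where L: "\<forall>k. \<exists>N. \<forall>i\<ge>N. val_ge v (X i - L) k"
    using complete unfolding val_complete_def by blast
  have "val_ge v (L - X k) (int k + 1)" for k
  proof -
    obtain N where "\<forall>i\<ge>N. val_ge v (X i - L) (int k + 1)" using L by blast
    then have "val_ge v (X (max N k) - L) (int k + 1)" by simp
    with cauchy[of k "max N k", OF max.cobounded2] have "val_ge v (X (max N k) - X k - (X (max N k) - L)) (int k + 1)"
      by (rule val_ge_diff)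
    then show ?thesis by simp
  qed
  then show ?thesis by blast
qed

lemma poly_cauchy_limit:
  fixes P :: "nat \<Rightarrow> 'a poly"
  assumes cauchy: "\<And>k. poly_val_ge (P (Suc k) - P k) (int k + 1)"
    and deg: "\<And>k. degree (P k) \<le> d"
  obtains Q where "degree Q \<le> d" "\<And>k. poly_val_ge (Q - P k) (int k + 1)"
proof -
  have tail: "poly_val_ge (P i - P k) (int k + 1)" if "k \<le> i" for i k
    using that
  proof (induction i rule: dec_induct)
    case (step i)
    have "poly_val_ge (P (Suc i) - P i) (int k + 1)"
      using poly_val_ge_mono[OF cauchy[of i], of "int k + 1"] step.hyps by simp
    from poly_val_ge_add[OF this step.IH] show ?case by simp
  qed simp
  have "\<exists>l. \<forall>k. val_ge v (l - coeff (P k) j) (int k + 1)" for j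
  proof -
    have "val_ge v (coeff (P i) j - coeff (P k) j) (int k + 1)" if "k \<le> i" for i k
      using tail[OF that] unfolding poly_val_ge_def by simp
    then show ?thesis using val_ge_cauchy_limit[of "\<lambda>k. coeff (P k) j"] by blast
  qed
  then obtain L where L: "\<And>j k. val_ge v (L j - coeff (P k) j) (int k + 1)"
    by metis
  define Q where "Q = (\<Sum>j\<le>d. monom (L j) j)"
  have coeff_Q: "coeff Q j = (if j \<le> d then L j else 0)" for j
    unfolding Q_def coeff_sum coeff_monom by (simp add: sum.delta)
  show ?thesis
  proof
    show "degree Q \<le> d" by (rule degree_le) (simp add: coeff_Q)
    show "poly_val_ge (Q - P k) (int k + 1)" for k
      unfolding poly_val_ge_def using L deg[of k] by (auto simp: coeff_Q coeff_eq_0)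
  qed
qed

definition hensel_approx :: "'a poly \<Rightarrow> nat \<Rightarrow> 'a poly \<Rightarrow> nat \<Rightarrow> 'a poly \<Rightarrow> 'a poly \<Rightarrow> bool" where
  "hensel_approx g s B0 k A B \<longleftrightarrow>
     poly_val_ge (A - monom 1 s) 1 \<and> poly_val_ge (B - B0) 1 \<and> poly_val_ge (g - A * B) (int k + 1) \<and>
     (\<forall>j\<ge>s. coeff A j = coeff (monom 1 s) j) \<and> degree B \<le> degree g - s"

lemma hensel_approx_degree: "hensel_approx g s B0 k A B \<Longrightarrow> degree A \<le> s"
  unfolding hensel_approx_def by (intro degree_le) (auto simp: coeff_monom)

context
  fixes g U V B0 :: "'a poly" and s :: nat
  assumes s: "s \<le> degree g" and B0: "poly_val_ge B0 0" "degree B0 \<le> degree g - s"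
    and U: "poly_val_ge U 0" and V: "poly_val_ge V 0" and bezout: "monom 1 s * U + B0 * V = 1"
begin

lemma hensel_step_approx:
  assumes approx: "hensel_approx g s B0 k A B" and step: "hensel_step s U V B0 g (A, B) = (A', B')"
  shows "hensel_approx g s B0 (Suc k) A' B'"
    and "poly_val_ge (A' - A) (int k + 1)" and "poly_val_ge (B' - B) (int k + 1)"
proof -
  define E where "E = g - A * B"
  define W where "W = V * E"
  define R where "R = poly_cutoff s W"
  define dB where "dB = U * E + poly_shift s W * B0"
  have A': "A' = A + R" and B': "B' = B + dB"
    using step unfolding hensel_step_def R_def dB_def W_def E_def by (simp_all add: Let_def add.assoc)
  have approxA: "poly_val_ge (A - monom 1 s) 1" and approxB: "poly_val_ge (B - B0) 1"
    and E: "poly_val_ge E (int k + 1)" and coeffA: "\<forall>j\<ge>s. coeff A j = coeff (monom 1 s) j"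
    and degB: "degree B \<le> degree g - s"
    using approx unfolding hensel_approx_def E_def by auto
  have W: "poly_val_ge W (int k + 1)" unfolding W_def using poly_val_ge_mult[OF V E] by simp
  have R: "poly_val_ge R (int k + 1)" unfolding R_def by (rule poly_val_ge_cutoff[OF W])
  have dB: "poly_val_ge dB (int k + 1)" unfolding dB_def
    using poly_val_ge_mult[OF U E] poly_val_ge_mult[OF poly_val_ge_shift[OF W] B0(1)]
    by (auto intro: poly_val_ge_add)
  have correction: "monom 1 s * dB + B0 * R = E"
  proof -
    have "monom 1 s * dB + B0 * R
        = monom 1 s * U * E + B0 * (R + monom 1 s * poly_shift s W)"
      unfolding dB_def by (simp add: algebra_simps)
    also have "\<dots> = (monom 1 s * U + B0 * V) * E"
      unfolding R_def poly_cutoff_plus_monom_mult_shift W_def by (simp add: algebra_simps)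
    finally show ?thesis using bezout by simp
  qed
  have "g - A' * B' = - ((A - monom 1 s) * dB + R * (B - B0) + R * dB)"
    using correction unfolding A' B' E_def by (simp add: algebra_simps)
  moreover have "poly_val_ge ((A - monom 1 s) * dB + R * (B - B0) + R * dB) (int (Suc k) + 1)"
    using poly_val_ge_mult[OF approxA dB] poly_val_ge_mult[OF R approxB] poly_val_ge_mult[OF R dB]
    by (intro poly_val_ge_add) (auto elim!: poly_val_ge_mono)
  ultimately have "poly_val_ge (g - A' * B') (int (Suc k) + 1)" by (metis poly_val_ge_uminus)
  moreover have "poly_val_ge (A' - monom 1 s) 1"
    using poly_val_ge_add[OF approxA poly_val_ge_mono[OF R]] by (simp add: A' algebra_simps)
  moreover have "poly_val_ge (B' - B0) 1"
    using poly_val_ge_add[OF approxB poly_val_ge_mono[OF dB]] by (simp add: B' algebra_simps)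
  moreover have coeffR: "coeff R j = 0" if "s \<le> j" for j
    using that unfolding R_def by (simp add: coeff_poly_cutoff)
  then have "\<forall>j\<ge>s. coeff A' j = coeff (monom 1 s) j" using coeffA by (simp add: A')
  moreover have "degree dB \<le> degree g - s"
  proof (rule degree_le_if_monom_mult_plus[OF correction _ B0(2) coeffR s])
    have "degree (A * B) \<le> degree g"
      using degree_mult_le[of A B] hensel_approx_degree[OF approx] degB s by linarith
    then show "degree E \<le> degree g" unfolding E_def using degree_diff_le by blast
  qed
  then have "degree B' \<le> degree g - s" unfolding B' using degB by (rule degree_add_le[rotated])
  ultimately show "hensel_approx g s B0 (Suc k) A' B'" unfolding hensel_approx_def by blast
  show "poly_val_ge (A' - A) (int k + 1)" "poly_val_ge (B' - B) (int k + 1)"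
    using R dB by (simp_all add: A' B')
qed

end

context
  fixes g U V B0 :: "'a poly" and s :: nat
  assumes s: "s \<le> degree g" and B0: "poly_val_ge B0 0" "degree B0 \<le> degree g - s"
    and U: "poly_val_ge U 0" and V: "poly_val_ge V 0" and bezout: "monom 1 s * U + B0 * V = 1"
    and err: "poly_val_ge (g - monom 1 s * B0) 1"
begin

lemma hensel_sequence:
  "\<exists>As Bs. \<forall>k. hensel_approx g s B0 k (As k) (Bs k) \<and>
     poly_val_ge (As (Suc k) - As k) (int k + 1) \<and> poly_val_ge (Bs (Suc k) - Bs k) (int k + 1)"
proof -
  define AB where "AB k = (hensel_step s U V B0 g ^^ k) (monom 1 s, B0)" for k
  have step: "hensel_step s U V B0 g (fst (AB k), snd (AB k)) = (fst (AB (Suc k)), snd (AB (Suc k)))"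
    for k by (simp add: AB_def)
  note step_approx = hensel_step_approx[OF s B0 U V bezout _ step]
  have approx: "hensel_approx g s B0 k (fst (AB k)) (snd (AB k))" for k
  proof (induction k)
    case 0
    show ?case using err B0(2) by (simp add: AB_def hensel_approx_def)
  qed (rule step_approx(1))
  show ?thesis
    using approx step_approx(2,3)[OF approx]
    by (intro exI[of _ "\<lambda>k. fst (AB k)"] exI[of _ "\<lambda>k. snd (AB k)"]) blast
qed

lemma hensel_lifting:
  obtains A B where "g = A * B" "degree A = s"
proof -
  from hensel_sequence obtain As Bs where seq: "\<forall>k. hensel_approx g s B0 k (As k) (Bs k) \<and>
     poly_val_ge (As (Suc k) - As k) (int k + 1) \<and> poly_val_ge (Bs (Suc k) - Bs k) (int k + 1)"
    by blast
  then have approx: "\<And>k. hensel_approx g s B0 k (As k) (Bs k)"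
    and cauchy: "\<And>k. poly_val_ge (As (Suc k) - As k) (int k + 1)"
      "\<And>k. poly_val_ge (Bs (Suc k) - Bs k) (int k + 1)"
    by blast+
  obtain A where A: "degree A \<le> s" "\<And>k. poly_val_ge (A - As k) (int k + 1)"
    using poly_cauchy_limit[OF cauchy(1) hensel_approx_degree[OF approx]] by blast
  have "degree (Bs k) \<le> degree g - s" for k
    using approx[of k] unfolding hensel_approx_def by simp
  then obtain B where B: "\<And>k. poly_val_ge (B - Bs k) (int k + 1)"
    using poly_cauchy_limit[OF cauchy(2)] by blast
  have As: "poly_val_ge (As k) 0" for k
  proof -
    have "poly_val_ge (As k - monom 1 s) 0"
      using approx[of k] unfolding hensel_approx_def by (auto elim: poly_val_ge_mono)
    from poly_val_ge_add[OF this poly_val_ge_monom[OF val_ge_one, of s]] show ?thesis by simp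
  qed
  have "poly_val_ge ((B - Bs 0) + (Bs 0 - B0) + B0) 0"
    using B[of 0] approx[of 0] B0(1) unfolding hensel_approx_def
    by (intro poly_val_ge_add) (auto elim: poly_val_ge_mono)
  then have B_int: "poly_val_ge B 0" by simp
  have gap: "poly_val_ge (g - A * B) (int k + 1)" for k
  proof -
    have "g - A * B = (g - As k * Bs k) - (A - As k) * B - As k * (B - Bs k)"
      by (simp add: algebra_simps)
    moreover have "poly_val_ge (g - As k * Bs k) (int k + 1)"
      using approx[of k] unfolding hensel_approx_def by blast
    moreover have "poly_val_ge ((A - As k) * B) (int k + 1)"
      using poly_val_ge_mult[OF A(2) B_int] by simp
    moreover have "poly_val_ge (As k * (B - Bs k)) (int k + 1)"
      using poly_val_ge_mult[OF As B] by simp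
    ultimately show ?thesis by (metis poly_val_ge_diff)
  qed
  have "poly_val_ge (g - A * B) k" for k :: int
    using gap[of "nat k"] by (rule poly_val_ge_mono) simp
  then have "g = A * B" using eq_0_if_poly_val_ge_all[of "g - A * B"] by simp
  moreover have "coeff A s - 1 = 0"
  proof (rule eq_0_if_val_ge_all)
    fix k :: int
    have "val_ge v (coeff (A - As (nat k)) s) (int (nat k) + 1)"
      using A(2) unfolding poly_val_ge_def by blast
    moreover have "coeff (As (nat k)) s = 1"
      using approx[of "nat k"] unfolding hensel_approx_def by simp
    ultimately show "val_ge v (coeff A s - 1) k" by (auto elim: val_ge_mono)
  qed
  then have "degree A = s" using A(1) le_degree[of A s] by simp
  ultimately show ?thesis by (rule that)
qed
end

lemma exists_factor_of_lowest_unit_coeff: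
  assumes g: "poly_val_ge g 0" and gs: "coeff g s = 1"
    and low: "\<And>j. j < s \<Longrightarrow> val_ge v (coeff g j) 1"
  obtains A B where "g = A * B" "degree A = s"
proof -
  have s: "s \<le> degree g" using gs by (intro le_degree) simp
  define B0 where "B0 = poly_shift s g"
  have B0: "poly_val_ge B0 0" "coeff B0 0 = 1" "degree B0 \<le> degree g - s"
    using g gs unfolding B0_def
    by (auto intro: poly_val_ge_shift degree_le simp: coeff_poly_shift coeff_eq_0)
  obtain U V where UV: "poly_val_ge U 0" "poly_val_ge V 0" "monom 1 s * U + B0 * V = 1"
    using monom_bezout[OF B0(1,2)] by blast
  have "g - monom 1 s * B0 = poly_cutoff s g"
    using poly_cutoff_plus_monom_mult_shift[of s g] unfolding B0_def by (simp add: algebra_simps)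
  then have "poly_val_ge (g - monom 1 s * B0) 1"
    using low by (simp add: poly_val_ge_def coeff_poly_cutoff)
  from hensel_lifting[OF s B0(1,3) UV this] that show ?thesis by blast
qed

text \<open>The Newton polygon of an irreducible polynomial is a single segment: a first
  coefficient of minimal valuation strictly inside would split it by Hensel's lemma.\<close>
lemma irreducible_val_coeff_ge:
  assumes irr: "irreducible f" and f0: "coeff f 0 \<noteq> 0" and fi: "coeff f i \<noteq> 0"
  shows "min (v (coeff f 0)) (v (lead_coeff f)) \<le> v (coeff f i)"
proof -
  define S where "S = {j. coeff f j \<noteq> 0}"
  have "finite S" unfolding S_def
    by (rule finite_subset[of _ "{..degree f}"]) (auto intro: le_degree)
  define \<mu> where "\<mu> = Min ((\<lambda>j. v (coeff f j)) ` S)"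
  have \<mu>_le: "\<mu> \<le> v (coeff f j)" if "coeff f j \<noteq> 0" for j
    unfolding \<mu>_def using \<open>finite S\<close> that by (simp add: S_def)
  have "\<mu> \<in> (\<lambda>j. v (coeff f j)) ` S"
    unfolding \<mu>_def using \<open>finite S\<close> fi by (intro Min_in) (auto simp: S_def)
  then obtain s0 where s0: "coeff f s0 \<noteq> 0 \<and> v (coeff f s0) = \<mu>" by (auto simp: S_def)
  define s where "s = (LEAST j. coeff f j \<noteq> 0 \<and> v (coeff f j) = \<mu>)"
  have s: "coeff f s \<noteq> 0" "v (coeff f s) = \<mu>"
    using LeastI[of "\<lambda>j. coeff f j \<noteq> 0 \<and> v (coeff f j) = \<mu>" s0] s0 unfolding s_def by auto
  have below: "\<mu> < v (coeff f j)" if "j < s" "coeff f j \<noteq> 0" for j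
    using not_less_Least[OF that(1)[unfolded s_def]] \<mu>_le[OF that(2)] that(2) by fastforce
  define g where "g = smult (inverse (coeff f s)) f"
  have coeff_g: "v (coeff g j) = v (coeff f j) - \<mu>" if "coeff f j \<noteq> 0" for j
    using that s by (simp add: g_def val_mult val_inverse)
  have "poly_val_ge g 0" unfolding poly_val_ge_def
  proof
    fix j
    show "val_ge v (coeff g j) 0"
      using coeff_g[of j] \<mu>_le[of j] by (cases "coeff f j = 0") (auto simp: g_def val_ge_def)
  qed
  moreover have "coeff g s = 1" using s(1) by (simp add: g_def)
  moreover have "val_ge v (coeff g j) 1" if "j < s" for j
    using coeff_g[of j] below[OF that] by (cases "coeff f j = 0") (auto simp: g_def val_ge_def)
  ultimately obtain A B where AB: "g = A * B" "degree A = s"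
    by (rule exists_factor_of_lowest_unit_coeff)
  have "irreducible g" unfolding g_def using irr s(1) irreducible_smult[of "inverse (coeff f s)" f]
    by simp
  from irreducible_factor_degree[OF this AB(1)] have "s = 0 \<or> s = degree g" using AB(2) by simp
  then have "s = 0 \<or> s = degree f" using s(1) by (simp add: g_def)
  then have "min (v (coeff f 0)) (v (lead_coeff f)) \<le> v (coeff f s)" by auto
  then show ?thesis using s(2) \<mu>_le[OF fi] by linarith
qed

lemma val_companion_coeff_ge:
  assumes irr: "irreducible (char_poly_of n a)"
    and val_beta: "val_E v n (companion n a) (companion n a) = - int m"
    and i: "i < n" and ai: "a i \<noteq> 0"
  shows "- int (m * n div ram_index v n (companion n a)) \<le> v (a i)"
proof -
  define B where "B = companion n a"
  define f where "f = nat (res_deg v n B)"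
  define e where "e = ram_index v n B"
  have n: "0 < n" using irr by (rule irreducible_char_poly_of_imp_pos)
  have "B \<in> carrier_mat n n" unfolding B_def companion_def by simp
  then have f: "1 \<le> f" "f \<le> n" "res_deg v n B = int f"
    using res_deg_bounds[OF n] unfolding f_def by fastforce+
  have e: "e = n div f" unfolding e_def ram_index_def f(3) by (simp flip: of_nat_div)
  have "0 < e" "e * f \<le> n" using f unfolding e by (auto simp: div_greater_zero_iff div_times_less_eq_dividend)
  then have "m * f \<le> m * n div e"
    by (simp add: less_eq_div_iff_mult_less_eq mult.assoc mult.commute[of f])
  then have "- int (m * n div e) \<le> - int (m * f)" by (simp only: of_nat_le_iff neg_le_iff_le)
  moreover have "- int (m * f) \<le> v (det B)"
  proof -
    have "v (det B) div int f = - int m" using val_beta f(3) unfolding val_E_def B_def by simp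
    then show ?thesis
      using div_mult_mod_eq[of "v (det B)" "int f"] pos_mod_sign[of "int f" "v (det B)"] f(1)
      by (simp add: algebra_simps)
  qed
  moreover have "a 0 \<noteq> 0"
  proof
    assume "a 0 = 0"
    then have "degree (char_poly_of n a) = 1"
      using irr by (intro degree_eq_1_if_irreducible_coeff_0) (simp_all add: coeff_char_poly_of n)
    then show False using i ai \<open>a 0 = 0\<close> by (simp add: degree_char_poly_of)
  qed
  moreover from this have "v (det B) = v (a 0)"
    using val_uminus[of 1] val_power[of "-1" "n - 1"]
    by (simp add: B_def det_companion[OF n] val_mult val_uminus val_one)
  moreover have "min (v (a 0)) 0 \<le> v (a i)"
    using irreducible_val_coeff_ge[OF irr, of i] \<open>a 0 \<noteq> 0\<close> ai i n
    by (simp add: coeff_char_poly_of degree_char_poly_of val_one)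
  ultimately show ?thesis unfolding e_def B_def by linarith
qed

end

theorem lemma6p3:
  fixes v :: "'a::field \<Rightarrow> int" and unif :: 'a and p :: nat
    and psi :: "'a \<Rightarrow> 'c::field"
    and n m :: nat and a :: "nat \<Rightarrow> 'a"
  assumes F: "nonarch_local_field v unif"
    and p: "residue_char v p"
    and R: "alg_closed TYPE('c)"
    and ell: "(of_nat p :: 'c) \<noteq> 0"
    and psi: "level_one_char v psi"
    and irr: "irreducible (char_poly_of n a)"
    and m1: "1 \<le> m"
    and val_beta: "val_E v n (companion n a) (companion n a) = - int m"
    and cop: "coprime m (ram_index v n (companion n a))"
    and gen: "residue_generates v n (companion n a)
               (unif ^ m \<cdot>\<^sub>m (companion n a ^\<^sub>m ram_index v n (companion n a)))"
  shows "\<forall>x \<in> unit_U (lattice_E v n (companion n a)) n (m div 2 + 1) \<inter>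
              {Sigma_mat n unif * g * Sigma_inv n unif | g.
                 g \<in> K_mirabolic v n (n + m * n div ram_index v n (companion n a))}.
           psi (mat_trace (companion n a * (x - 1\<^sub>m n))) = 1"
proof
  interpret complete_valued_field v unif
    using F by unfold_locales (auto simp: nonarch_local_field_def)
  define M where "M = m * n div ram_index v n (companion n a)"
  fix x
  assume "x \<in> unit_U (lattice_E v n (companion n a)) n (m div 2 + 1) \<inter>
    {Sigma_mat n unif * g * Sigma_inv n unif | g. g \<in> K_mirabolic v n (n + M)}"
  then obtain g where x: "x = Sigma_mat n unif * g * Sigma_inv n unif"
    and g: "g \<in> K_mirabolic v n (n + M)"
    unfolding M_def by blast
  have gc: "g \<in> carrier_mat n n" using g by (simp add: K_mirabolic_def GL_O_def)
  have "val_ge v (mat_trace (companion n a * (x - 1\<^sub>m n))) 1"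
    unfolding x Sigma_conj_minus_one[OF unif_nonzero gc]
    by (rule val_ge_trace_companion_Sigma_conj[OF _ K_mirabolic_minus_one_entries[OF g]])
      (use val_companion_coeff_ge[OF irr val_beta] in \<open>simp_all add: M_def minus_carrier_mat\<close>)
  then show "psi (mat_trace (companion n a * (x - 1\<^sub>m n))) = 1"
    using psi unfolding level_one_char_def by blast
qed

end
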